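(* Let $K\subset\mathbb{R}^d$ be compact and star-shaped, and for $x,y\in\mathbb{R}^d$ let $S(x,y)=\frac{x+y}2+\|x-y\|K$. Let $c>0$ and let $x,y,u,v\in\mathbb{R}^d$ satisfy $\|x-y\|\ge\|u-v\|$ and $\|\frac{x+y}2-\frac{u+v}2\|\le c\,\mathrm{diam}(K)\|x-y\|$. Then $$\mathrm{vol}(S(x,y)\setminus S(u,v))\ge\frac1{c+1}\frac{\mathrm{vol}(K)}{\mathrm{diam}(K)}\Big\|\frac{x+y}2-\frac{u+v}2\Big\|\,\|x-y\|^{d-1}.$$
   Context: $K$ star-shaped means $[0,z]\subset K$ for all $z\in K$. $\mathrm{diam}(K)=\sup\{\|u-v\|:u,v\in K\}$. *)

theory Defs
  imports "HOL-Analysis.Analysis"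
begin

definition star_shaped0 :: "'a::real_vector set \<Rightarrow> bool" where
  "star_shaped0 K \<longleftrightarrow> (\<forall>z\<in>K. closed_segment 0 z \<subseteq> K)"

definition Sset :: "'a::real_normed_vector set \<Rightarrow> 'a \<Rightarrow> 'a \<Rightarrow> 'a set" where
  "Sset K x y = (\<lambda>k. (1/2) *\<^sub>R (x + y) + norm (x - y) *\<^sub>R k) ` K"

end

theory Submission
  imports Defs
begin

text \<open>
  Write \<open>m, m'\<close> for the midpoints and \<open>r = \<parallel>x - y\<parallel> \<ge> r' = \<parallel>u - v\<parallel>\<close>.
  Since \<open>K\<close> is star-shaped, \<open>m' + r' K \<subseteq> m' + r K\<close>, and \<open>S(x,y) - (m' + r K)\<close> is the image
  of \<open>K - (w + K)\<close>, \<open>w = (m' - m) / r\<close>, under \<open>z \<mapsto> m + r z\<close>, so it has volume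
  \<open>r\<^sup>d vol(K - (w + K))\<close>.
  Finally \<open>vol(K - (w + K)) \<ge> vol K \<parallel>w\<parallel> / (diam K + \<parallel>w\<parallel>)\<close>: the translates
  \<open>j w + (K - (w + K))\<close>, \<open>0 \<le> j < n\<close>, cover \<open>K\<close> as soon as \<open>n \<parallel>w\<parallel> > diam K\<close>,
  because for \<open>p \<in> K\<close> and the largest \<open>j\<close> with \<open>p - j w \<in> K\<close> we get \<open>p - j w \<notin> w + K\<close>.
\<close>

lemma scaleR_mem_star_shaped0:
  assumes "star_shaped0 K" "k \<in> K" "0 \<le> a" "a \<le> 1"
  shows "a *\<^sub>R k \<in> K"
proof -
  have "a *\<^sub>R k \<in> closed_segment 0 k"
    using assms(3,4) by (auto simp: closed_segment_def)
  then show ?thesis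
    using assms(1,2) unfolding star_shaped0_def by blast
qed

lemma homothetic_image_mono_star_shaped0:
  assumes "star_shaped0 K" "0 \<le> s" "s \<le> r"
  shows "(\<lambda>k. b + s *\<^sub>R k) ` K \<subseteq> (\<lambda>k. b + r *\<^sub>R k) ` K"
proof (cases "r = 0")
  case True
  then show ?thesis using assms by auto
next
  case False
  with assms have "0 < r" by simp
  show ?thesis
  proof
    fix p assume "p \<in> (\<lambda>k. b + s *\<^sub>R k) ` K"
    then obtain k where k: "k \<in> K" "p = b + s *\<^sub>R k" by auto
    have "(s / r) *\<^sub>R k \<in> K"
      using assms k \<open>0 < r\<close> by (intro scaleR_mem_star_shaped0) auto
    moreover have "p = b + r *\<^sub>R ((s / r) *\<^sub>R k)"
      using k \<open>0 < r\<close> by simp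
    ultimately show "p \<in> (\<lambda>k. b + r *\<^sub>R k) ` K" by blast
  qed
qed

lemma subset_UN_translates_Diff_translation:
  fixes K :: "'a::real_normed_vector set"
  assumes "bounded K" "diameter K < real n * norm w"
  shows "K \<subseteq> (\<Union>j<n. (+) (real j *\<^sub>R w) ` (K - (+) w ` K))"
proof
  fix p assume p: "p \<in> K"
  define J where "J = {j. p - real j *\<^sub>R w \<in> K}"
  have J_less: "J \<subseteq> {..<n}"
  proof
    fix j assume "j \<in> J"
    then have "real j * norm w \<le> diameter K"
      using diameter_bounded_bound[OF assms(1) p, of "p - real j *\<^sub>R w"] by (simp add: J_def dist_norm)
    with assms(2) have "real j * norm w < real n * norm w" by linarith
    then show "j \<in> {..<n}"
      by (auto simp: mult_less_cancel_right)
  qed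
  define j where "j = Max J"
  have "0 \<in> J" using p by (simp add: J_def)
  with J_less have j: "j \<in> J" "Suc j \<notin> J"
    unfolding j_def by (auto intro: Max_in dest: Max_ge[rotated] simp: finite_subset)
  have "p - real j *\<^sub>R w \<notin> (+) w ` K"
  proof
    assume "p - real j *\<^sub>R w \<in> (+) w ` K"
    then have "p - real (Suc j) *\<^sub>R w \<in> K"
      by (auto simp: algebra_simps)
    with j show False by (simp add: J_def)
  qed
  with j have "p - real j *\<^sub>R w \<in> K - (+) w ` K" by (simp add: J_def)
  then have "p \<in> (+) (real j *\<^sub>R w) ` (K - (+) w ` K)"
    by (rule image_eqI[rotated]) simp
  moreover have "j < n" using j J_less by auto
  ultimately show "p \<in> (\<Union>j<n. (+) (real j *\<^sub>R w) ` (K - (+) w ` K))"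
    by blast
qed

lemma measure_Diff_translation_ge:
  fixes K :: "'a::euclidean_space set"
  assumes "compact K"
  shows "measure lebesgue K * norm w \<le> (diameter K + norm w) * measure lebesgue (K - (+) w ` K)"
proof (cases "w = 0")
  case True
  then show ?thesis by simp
next
  case False
  define A where "A = K - (+) w ` K"
  define n where "n = nat \<lfloor>diameter K / norm w\<rfloor> + 1"
  have "0 \<le> diameter K / norm w"
    using assms by (simp add: diameter_ge_0 compact_imp_bounded)
  then have "real n = \<lfloor>diameter K / norm w\<rfloor> + 1"
    by (simp add: n_def)
  then have "diameter K / norm w < real n" "real n \<le> diameter K / norm w + 1"
    by linarith+
  with False have n: "diameter K < real n * norm w" "real n * norm w \<le> diameter K + norm w"
    by (simp_all add: field_simps)
  have A: "A \<in> lmeasurable"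
    unfolding A_def using assms
    by (intro fmeasurable_Diff fmeasurableD lmeasurable_compact compact_translation)
  have "measure lebesgue K \<le> measure lebesgue (\<Union>j<n. (+) (real j *\<^sub>R w) ` A)"
    using subset_UN_translates_Diff_translation[OF compact_imp_bounded[OF assms] n(1)] assms A
    unfolding A_def
    by (intro measure_mono_fmeasurable fmeasurableD[OF lmeasurable_compact] fmeasurable.finite_UN
          measurable_translation) auto
  also have "\<dots> \<le> (\<Sum>j<n. measure lebesgue ((+) (real j *\<^sub>R w) ` A))"
    using A by (intro measure_UNION_le fmeasurableD measurable_translation) auto
  also have "\<dots> = real n * measure lebesgue A"
    by (simp add: measure_translation)
  finally have "measure lebesgue K * norm w \<le> real n * norm w * measure lebesgue A"
    by (metis mult_right_mono norm_ge_zero mult.commute mult.left_commute)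
  also have "\<dots> \<le> (diameter K + norm w) * measure lebesgue A"
    using n(2) by (intro mult_right_mono) auto
  finally show ?thesis unfolding A_def .
qed

lemma measure_Diff_homothetic_ge:
  fixes K :: "'a::euclidean_space set"
  assumes "compact K" "star_shaped0 K" "0 \<le> s" "s \<le> r" "0 < r"
  shows "measure lebesgue K * norm (b - a) * r ^ DIM('a)
    \<le> (diameter K * r + norm (b - a))
      * measure lebesgue ((\<lambda>k. a + r *\<^sub>R k) ` K - (\<lambda>k. b + s *\<^sub>R k) ` K)"
    (is "?vK * _ * _ \<le> (?D * _ + _) * ?M")
proof -
  define w where "w = (1 / r) *\<^sub>R (b - a)"
  define f where "f z = r *\<^sub>R z + a" for z
  have b: "b = f w" and norm_ba: "norm (b - a) = r * norm w"
    using assms(5) by (simp_all add: f_def w_def)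
  have "inj f" using assms(5) by (simp add: f_def inj_on_def)
  moreover have "f ` K = (\<lambda>k. a + r *\<^sub>R k) ` K" "f ` (+) w ` K = (\<lambda>k. b + r *\<^sub>R k) ` K"
    by (simp_all add: image_image b f_def algebra_simps)
  ultimately have f_Diff: "f ` (K - (+) w ` K) = (\<lambda>k. a + r *\<^sub>R k) ` K - (\<lambda>k. b + r *\<^sub>R k) ` K"
    by (simp add: image_set_diff)
  have "r ^ DIM('a) * measure lebesgue (K - (+) w ` K)
      = measure lebesgue ((\<lambda>k. a + r *\<^sub>R k) ` K - (\<lambda>k. b + r *\<^sub>R k) ` K)"
    using measure_lebesgue_affine[of r a "K - (+) w ` K"] assms(5) f_Diff by (simp add: f_def)
  also have "\<dots> \<le> ?M"
  proof -
    have "(\<lambda>k. c + t *\<^sub>R k) ` K \<in> lmeasurable" for c t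
      using assms(1) by (intro lmeasurable_compact compact_continuous_image continuous_intros)
    then show ?thesis
      using homothetic_image_mono_star_shaped0[OF assms(2-4), of b]
      by (intro measure_mono_fmeasurable fmeasurable_Diff sets.Diff fmeasurableD) auto
  qed
  finally have scaled: "r ^ DIM('a) * measure lebesgue (K - (+) w ` K) \<le> ?M" .
  have "0 \<le> ?D"
    using assms(1) by (simp add: diameter_ge_0 compact_imp_bounded)
  have "?vK * norm (b - a) * r ^ DIM('a) = r * r ^ DIM('a) * (?vK * norm w)"
    by (simp add: norm_ba ac_simps)
  also have "\<dots> \<le> r * r ^ DIM('a) * ((?D + norm w) * measure lebesgue (K - (+) w ` K))"
    using measure_Diff_translation_ge[OF assms(1)] assms(5) by (intro mult_left_mono) auto
  also have "\<dots> = r * (?D + norm w) * (r ^ DIM('a) * measure lebesgue (K - (+) w ` K))"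
    by (simp add: ac_simps)
  also have "\<dots> \<le> r * (?D + norm w) * ?M"
    using scaled assms(5) \<open>0 \<le> ?D\<close> by (intro mult_left_mono) auto
  also have "\<dots> = (?D * r + norm (b - a)) * ?M"
    by (simp add: norm_ba algebra_simps)
  finally show ?thesis .
qed

theorem lemma4p2:
  fixes K :: "'a::euclidean_space set" and x y u v :: 'a and c :: real
  assumes "compact K" and "star_shaped0 K" and "c > 0"
    and "norm (x - y) \<ge> norm (u - v)"
    and "norm ((1/2) *\<^sub>R (x + y) - (1/2) *\<^sub>R (u + v)) \<le> c * diameter K * norm (x - y)"
  shows "measure lebesgue (Sset K x y - Sset K u v) \<ge>
           (1 / (c + 1)) * (measure lebesgue K / diameter K)
           * norm ((1/2) *\<^sub>R (x + y) - (1/2) *\<^sub>R (u + v)) * norm (x - y) ^ (DIM('a) - 1)"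
proof -
  define m m' r where "m = (1/2) *\<^sub>R (x + y)" and "m' = (1/2) *\<^sub>R (u + v)" and "r = norm (x - y)"
  define M where "M = measure lebesgue (Sset K x y - Sset K u v)"
  have dist_mm': "norm (m - m') \<le> c * diameter K * r"
    using assms(5) by (simp add: m_def m'_def r_def)
  show ?thesis
  proof (cases "r = 0 \<or> diameter K = 0")
    case True
    with dist_mm' have "norm (m - m') = 0 \<or> diameter K = 0" by auto
    then show ?thesis by (auto simp: m_def m'_def)
  next
    case False
    then have "0 < r" "0 < diameter K" "0 \<le> M"
      using diameter_ge_0[OF compact_imp_bounded[OF assms(1)]] by (auto simp: r_def M_def)
    have "(measure lebesgue K * norm (m - m') * r ^ (DIM('a) - 1)) * r
        = measure lebesgue K * norm (m - m') * r ^ DIM('a)"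
      by (metis power_minus_mult[OF DIM_positive] mult.assoc)
    also have "\<dots> \<le> (diameter K * r + norm (m - m')) * M"
      using measure_Diff_homothetic_ge[OF assms(1,2) norm_ge_zero assms(4) \<open>0 < r\<close>[unfolded r_def], of m' m]
      by (simp add: M_def Sset_def m_def m'_def r_def norm_minus_commute)
    also have "\<dots> \<le> ((c + 1) * diameter K * r) * M"
      using dist_mm' \<open>0 \<le> M\<close> by (intro mult_right_mono) (auto simp: algebra_simps)
    finally have "measure lebesgue K * norm (m - m') * r ^ (DIM('a) - 1) \<le> (c + 1) * diameter K * M"
      using \<open>0 < r\<close> by (simp add: ac_simps)
    moreover have "0 < (c + 1) * diameter K"
      using \<open>0 < diameter K\<close> assms(3) by simp
    ultimately have "1 / (c + 1) * (measure lebesgue K / diameter K) * norm (m - m') * r ^ (DIM('a) - 1) \<le> M"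
      by (simp add: pos_divide_le_eq mult.commute)
    then show ?thesis by (simp only: M_def m_def m'_def r_def)
  qed
qed

end
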